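(* Consider a uniform planar array with $M_x$ antennas along the $x$-axis (spacing $d_x$) and $M_y$ along the $y$-axis (spacing $d_y$), wavelength $\lambda$, and for $\boldsymbol\theta=(\theta_x,\theta_y)$ let $\mathbf{a}(\boldsymbol\theta)\in\mathbb{C}^{M_xM_y}$ have entries $e^{j\frac{2\pi}{\lambda}(d_x m_x\sin\theta_x+d_y m_y\sin\theta_y)}$, $0\le m_x\le M_x-1$, $0\le m_y\le M_y-1$. Let $\boldsymbol\theta_1=(\theta_{x,1},\theta_{y,1})$ and $\boldsymbol\theta_2=(\theta_{x,2},\theta_{y,2})$ be random with $\sin\theta_{x,1}-\sin\theta_{x,2}\sim U[-\alpha_x,\alpha_x]$ and $\sin\theta_{y,1}-\sin\theta_{y,2}\sim U[-\alpha_y,\alpha_y]$ independent of $\sin\theta_{x,1}-\sin\theta_{x,2}$, where $\alpha_x,\alpha_y\in[0,1]$. Then $$\mathbb{E}\left[\mathbf{a}^H(\boldsymbol\theta_1)\mathbf{a}(\boldsymbol\theta_2)\right]=\mu\!\left(\frac{\alpha_xd_x}{\lambda},M_x\right)\mu\!\left(\frac{\alpha_yd_y}{\lambda},M_y\right),$$ $$\operatorname{Var}\left[\mathbf{a}^H(\boldsymbol\theta_1)\mathbf{a}(\boldsymbol\theta_2)\right]=\eta\!\left(\frac{\alpha_xd_x}{\lambda},M_x\right)\eta\!\left(\frac{\alpha_yd_y}{\lambda},M_y\right)-\left[\mu\!\left(\frac{\alpha_xd_x}{\lambda},M_x\right)\mu\!\left(\frac{\alpha_yd_y}{\lambda},M_y\right)\right]^2,$$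 where $\mu(c,N)=\sum_{m=0}^{N-1}\operatorname{sinc}(2\pi mc)$ and $\eta(c,N)=\sum_{m_1=0}^{N-1}\sum_{m_2=0}^{N-1}\operatorname{sinc}(2\pi c(m_1-m_2))$.
   Context: $\operatorname{sinc}(x)=\sin(x)/x$ for $x\neq0$, $\operatorname{sinc}(0)=1$. For a complex random variable $Z$, $\operatorname{Var}[Z]=\mathbb{E}|Z|^2-|\mathbb{E}Z|^2$. A uniform distribution on $[-0,0]$ means the difference is $0$ almost surely. *)

theory Defs
  imports "HOL-Probability.Probability"
begin

text \<open>sinc (library abbreviation from Sinc_Integral):
  sinc x = (if x = 0 then 1 else sin x / x).\<close>

text \<open>Uniform distribution on [-a,a] (as a measure on the reals); for a = 0 it is
  the point mass at 0, following the stated convention.\<close>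
definition unif_sym :: "real \<Rightarrow> real measure" where
  "unif_sym a = (if a = 0 then return borel 0 else uniform_measure lborel {-a..a})"

definition steer :: "real \<Rightarrow> real \<Rightarrow> real \<Rightarrow> real \<Rightarrow> real \<Rightarrow> nat \<times> nat \<Rightarrow> complex" where
  "steer dx dy lam thx thy = (\<lambda>(mx, my).
     cis (2 * pi / lam * (dx * real mx * sin thx + dy * real my * sin thy)))"

definition herm_inner :: "nat \<Rightarrow> nat \<Rightarrow> (nat \<times> nat \<Rightarrow> complex) \<Rightarrow> (nat \<times> nat \<Rightarrow> complex) \<Rightarrow> complex" where
  "herm_inner Mx My a b = (\<Sum>i \<in> {..<Mx} \<times> {..<My}. cnj (a i) * b i)"

definition mu_fn :: "real \<Rightarrow> nat \<Rightarrow> real" where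
  "mu_fn c N = (\<Sum>m<N. sinc (2 * pi * real m * c))"

definition eta_fn :: "real \<Rightarrow> nat \<Rightarrow> real" where
  "eta_fn c N = (\<Sum>m1<N. \<Sum>m2<N. sinc (2 * pi * c * (real m1 - real m2)))"

end

theory Submission
  imports Defs
begin

text \<open>Write X and Y for the two differences of sines. Every entry of
  a^H(\<theta>1) a(\<theta>2) is a phase in X times a phase in Y, so the inner product is a
  product Fx(X) Fy(Y) of two one-dimensional array factors F(x) = \<Sum>m. exp(j u(m) x)
  with u(m) = -2\<pi> d m / \<lambda>, and independence of X and Y splits both E Z and E |Z|^2
  into one-dimensional factors. On one axis E F(X) = \<Sum>m. \<phi>(u(m)) and
  E |F(X)|^2 = \<Sum>m1 m2. \<phi>(u(m1) - u(m2)) for the characteristic function \<phi> of X,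
  and the characteristic function of the uniform distribution on [-\<alpha>, \<alpha>] is
  t \<mapsto> sinc(\<alpha> t).\<close>

lemma interval_integral_iexp_symmetric:
  fixes a t :: real
  shows "(CLBINT x=-a..a. iexp (t * x)) = of_real (2 * a * sinc (t * a))"
proof (cases "t = 0")
  case True
  have "(CLBINT x=-a..a. iexp (t * x)) = of_real a - of_real (- a)"
    by (rule interval_integral_FTC_finite)
       (use True in \<open>auto intro!: continuous_intros derivative_eq_intros
          simp: has_vector_derivative_complex_iff\<close>)
  then show ?thesis
    using True by simp
next
  case False
  have "(CLBINT x=-a..a. iexp (t * x)) = - \<i> / t * cis (t * a) - - \<i> / t * cis (t * - a)"
    by (rule interval_integral_FTC_finite)
       (use False in \<open>auto intro!: continuous_intros derivative_eq_intros
          simp: has_vector_derivative_complex_iff cis_conv_exp[symmetric] field_simps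
          simp del: of_real_mult\<close>)
  also have "\<dots> = of_real (2 * a * sinc (t * a))"
    using False by (simp add: complex_eq_iff field_simps)
  finally show ?thesis .
qed

lemma char_unif_sym:
  assumes "0 \<le> a"
  shows "char (unif_sym a) t = sinc (t * a)"
proof (cases "a = 0")
  case True
  then show ?thesis
    by (simp add: unif_sym_def char_def integral_return)
next
  case False
  with assms have "0 < a" by simp
  have "uniform_measure lborel {-a..a}
      = density lborel (\<lambda>x. ennreal (indicator {-a..a} x / (2 * a)))"
    unfolding uniform_measure_def using \<open>0 < a\<close>
    by (intro arg_cong[where f="density lborel"] ext)
       (auto simp: indicator_def divide_ennreal ennreal_1[symmetric] simp del: ennreal_1)
  then have "char (unif_sym a) t
      = (\<integral>x. (indicator {-a..a} x / (2 * a)) *\<^sub>R iexp (t * x) \<partial>lborel)"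
    using \<open>0 < a\<close> by (simp add: unif_sym_def char_def) (subst integral_density, auto)
  also have "\<dots> = (1 / (2 * a)) *\<^sub>R (CLBINT x:{-a..a}. iexp (t * x))"
    unfolding set_lebesgue_integral_def
    by (subst integral_scaleR_right[symmetric]) (auto intro!: Bochner_Integration.integral_cong)
  also have "\<dots> = (1 / (2 * a)) *\<^sub>R (CLBINT x=-a..a. iexp (t * x))"
    using \<open>0 < a\<close> by (simp add: interval_integral_Icc)
  also have "\<dots> = sinc (t * a)"
    using \<open>0 < a\<close> unfolding interval_integral_iexp_symmetric by (simp add: scaleR_conv_of_real)
  finally show ?thesis .
qed

definition array_factor :: "('i \<Rightarrow> real) \<Rightarrow> 'i set \<Rightarrow> real \<Rightarrow> complex" where
  "array_factor u K x = (\<Sum>k\<in>K. iexp (u k * x))"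

lemma borel_measurable_array_factor [measurable]: "array_factor u K \<in> borel_measurable borel"
  unfolding array_factor_def by measurable

lemma norm_array_factor_le: "norm (array_factor u K x) \<le> card K"
  unfolding array_factor_def using sum_norm_bound[of K "\<lambda>k. iexp (u k * x)" 1] by simp

lemma norm_array_factor_squared:
  "of_real ((norm (array_factor u K x))\<^sup>2) = (\<Sum>k\<in>K. \<Sum>l\<in>K. iexp ((u k - u l) * x))"
proof -
  have "iexp (u k * x) * cnj (iexp (u l * x)) = iexp ((u k - u l) * x)" for k l
    by (simp add: exp_cnj exp_add[symmetric] algebra_simps)
  then show ?thesis
    unfolding complex_norm_square array_factor_def cnj_sum sum_product by simp
qed

context real_distribution
begin

lemma integral_array_factor:
  "(\<integral>x. array_factor u K x \<partial>M) = (\<Sum>k\<in>K. char M (u k))"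
  unfolding array_factor_def char_def
  by (simp add: integrable_iexp del: of_real_mult)

lemma integral_norm_array_factor_squared:
  "of_real (\<integral>x. (norm (array_factor u K x))\<^sup>2 \<partial>M) = (\<Sum>k\<in>K. \<Sum>l\<in>K. char M (u k - u l))"
proof -
  have "complex_of_real (\<integral>x. (norm (array_factor u K x))\<^sup>2 \<partial>M)
      = (\<integral>x. of_real ((norm (array_factor u K x))\<^sup>2) \<partial>M)"
    by (rule integral_complex_of_real[symmetric])
  also have "\<dots> = (\<integral>x. (\<Sum>k\<in>K. \<Sum>l\<in>K. iexp ((u k - u l) * x)) \<partial>M)"
    by (simp only: norm_array_factor_squared)
  also have "\<dots> = (\<Sum>k\<in>K. \<Sum>l\<in>K. char M (u k - u l))"
    by (simp add: char_def integrable_iexp del: of_real_mult)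
  finally show ?thesis .
qed

end

lemma (in prob_space) integral_indep_var_comp_mult:
  fixes f g :: "_ \<Rightarrow> 'b::{real_normed_field, banach, second_countable_topology}"
  assumes "indep_var S X T Y"
    and "f \<in> borel_measurable S" "g \<in> borel_measurable T"
    and "\<And>x. norm (f x) \<le> B" "\<And>y. norm (g y) \<le> C"
  shows "(\<integral>\<omega>. f (X \<omega>) * g (Y \<omega>) \<partial>M) = (\<integral>\<omega>. f (X \<omega>) \<partial>M) * (\<integral>\<omega>. g (Y \<omega>) \<partial>M)"
proof -
  have [measurable]: "X \<in> measurable M S" "Y \<in> measurable M T"
    using indep_var_rv1 indep_var_rv2 assms(1) by blast+
  show ?thesis
    using indep_var_compose[OF assms(1-3)] assms(4,5)
    by (intro indep_var_lebesgue_integral integrable_const_bound)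
       (auto simp: comp_def intro: measurable_compose[OF _ assms(2)] measurable_compose[OF _ assms(3)])
qed

definition array_phase :: "real \<Rightarrow> real \<Rightarrow> nat \<Rightarrow> real" where
  "array_phase lam d m = - (2 * pi / lam * d * real m)"

lemma herm_inner_steer:
  "herm_inner Mx My (steer dx dy lam s1 t1) (steer dx dy lam s2 t2)
   = array_factor (array_phase lam dx) {..<Mx} (sin s1 - sin s2)
   * array_factor (array_phase lam dy) {..<My} (sin t1 - sin t2)"
proof -
  have "cnj (steer dx dy lam s1 t1 (mx, my)) * steer dx dy lam s2 t2 (mx, my)
      = iexp (array_phase lam dx mx * (sin s1 - sin s2))
      * iexp (array_phase lam dy my * (sin t1 - sin t2))" for mx my
    unfolding steer_def array_phase_def cis_conv_exp[symmetric]
    by (simp add: cis_cnj cis_mult divide_inverse algebra_simps)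
  then show ?thesis
    unfolding herm_inner_def array_factor_def sum_product sum.cartesian_product
    by (intro sum.cong) auto
qed

lemma sum_char_unif_sym_eq_mu_fn:
  assumes "0 \<le> a"
  shows "(\<Sum>m<N. char (unif_sym a) (array_phase lam d m)) = mu_fn (a * d / lam) N"
proof -
  have "array_phase lam d m * a = - (2 * pi * real m * (a * d / lam))" for m
    by (simp add: array_phase_def field_simps)
  then show ?thesis
    unfolding mu_fn_def char_unif_sym[OF assms] by (simp only: sinc_neg of_real_sum)
qed

lemma sum_char_unif_sym_eq_eta_fn:
  assumes "0 \<le> a"
  shows "(\<Sum>m1<N. \<Sum>m2<N. char (unif_sym a) (array_phase lam d m1 - array_phase lam d m2))
    = eta_fn (a * d / lam) N"
proof -
  have "(array_phase lam d m1 - array_phase lam d m2) * a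
      = - (2 * pi * (a * d / lam) * (real m1 - real m2))" for m1 m2
    by (simp add: array_phase_def divide_inverse algebra_simps)
  then show ?thesis
    unfolding eta_fn_def char_unif_sym[OF assms] by (simp only: sinc_neg of_real_sum)
qed

context prob_space
begin

lemma integral_array_factor_unif_sym:
  assumes "random_variable borel X" "distr M borel X = unif_sym a" "0 \<le> a"
  shows "(\<integral>\<omega>. array_factor (array_phase lam d) {..<N} (X \<omega>) \<partial>M)
    = mu_fn (a * d / lam) N"
proof -
  let ?F = "array_factor (array_phase lam d) {..<N}"
  have "(\<integral>\<omega>. ?F (X \<omega>) \<partial>M) = (\<integral>x. ?F x \<partial>unif_sym a)"
    using assms(1,2) by (subst integral_distr[symmetric]) auto
  also have "\<dots> = (\<Sum>m<N. char (unif_sym a) (array_phase lam d m))"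
    using real_distribution_distr[OF assms(1)] assms(2)
    by (intro real_distribution.integral_array_factor) simp
  also have "\<dots> = mu_fn (a * d / lam) N"
    by (rule sum_char_unif_sym_eq_mu_fn[OF assms(3)])
  finally show ?thesis .
qed

lemma integral_norm_array_factor_squared_unif_sym:
  assumes "random_variable borel X" "distr M borel X = unif_sym a" "0 \<le> a"
  shows "(\<integral>\<omega>. (norm (array_factor (array_phase lam d) {..<N} (X \<omega>)))\<^sup>2 \<partial>M)
    = eta_fn (a * d / lam) N"
proof -
  let ?F = "array_factor (array_phase lam d) {..<N}"
  have "complex_of_real (\<integral>\<omega>. (norm (?F (X \<omega>)))\<^sup>2 \<partial>M)
      = of_real (\<integral>x. (norm (?F x))\<^sup>2 \<partial>unif_sym a)"
    using assms(1,2) by (subst integral_distr[symmetric]) auto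
  also have "\<dots> = (\<Sum>m1<N. \<Sum>m2<N.
      char (unif_sym a) (array_phase lam d m1 - array_phase lam d m2))"
    using real_distribution_distr[OF assms(1)] assms(2)
    by (intro real_distribution.integral_norm_array_factor_squared) simp
  also have "\<dots> = eta_fn (a * d / lam) N"
    by (rule sum_char_unif_sym_eq_eta_fn[OF assms(3)])
  finally show ?thesis
    by (simp only: of_real_eq_iff)
qed

end

theorem lemma1:
  fixes M :: "'a measure"
    and thx1 thy1 thx2 thy2 :: "'a \<Rightarrow> real"
    and Mx My :: nat and dx dy lam ax ay :: real
  assumes "prob_space M"
    and "thx1 \<in> borel_measurable M" "thy1 \<in> borel_measurable M"
    and "thx2 \<in> borel_measurable M" "thy2 \<in> borel_measurable M"
    and "dx > 0" "dy > 0" "lam > 0"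
    and "0 \<le> ax" "ax \<le> 1" "0 \<le> ay" "ay \<le> 1"
    and "distr M borel (\<lambda>\<omega>. sin (thx1 \<omega>) - sin (thx2 \<omega>)) = unif_sym ax"
    and "distr M borel (\<lambda>\<omega>. sin (thy1 \<omega>) - sin (thy2 \<omega>)) = unif_sym ay"
    and "prob_space.indep_var M borel (\<lambda>\<omega>. sin (thx1 \<omega>) - sin (thx2 \<omega>))
                                borel (\<lambda>\<omega>. sin (thy1 \<omega>) - sin (thy2 \<omega>))"
  shows "(let Z = (\<lambda>\<omega>. herm_inner Mx My (steer dx dy lam (thx1 \<omega>) (thy1 \<omega>))
                                        (steer dx dy lam (thx2 \<omega>) (thy2 \<omega>)))
          in integral\<^sup>L M Z = complex_of_real (mu_fn (ax * dx / lam) Mx * mu_fn (ay * dy / lam) My)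
           \<and> (integral\<^sup>L M (\<lambda>\<omega>. (cmod (Z \<omega>))\<^sup>2) - (cmod (integral\<^sup>L M Z))\<^sup>2
               = eta_fn (ax * dx / lam) Mx * eta_fn (ay * dy / lam) My
                 - (mu_fn (ax * dx / lam) Mx * mu_fn (ay * dy / lam) My)\<^sup>2))"
proof -
  interpret prob_space M by (rule assms(1))
  define X where "X = (\<lambda>\<omega>. sin (thx1 \<omega>) - sin (thx2 \<omega>))"
  define Y where "Y = (\<lambda>\<omega>. sin (thy1 \<omega>) - sin (thy2 \<omega>))"
  define Fx where "Fx = array_factor (array_phase lam dx) {..<Mx}"
  define Fy where "Fy = array_factor (array_phase lam dy) {..<My}"
  have indep: "indep_var borel X borel Y"
    using assms(15) by (simp add: X_def Y_def)
  then have X: "random_variable borel X" and Y: "random_variable borel Y"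
    by (rule indep_var_rv1, rule indep_var_rv2)
  have distX: "distr M borel X = unif_sym ax" and distY: "distr M borel Y = unif_sym ay"
    using assms(13,14) by (simp_all add: X_def Y_def)
  have EX: "(\<integral>\<omega>. Fx (X \<omega>) \<partial>M) = mu_fn (ax * dx / lam) Mx"
    unfolding Fx_def by (rule integral_array_factor_unif_sym[OF X distX assms(9)])
  have EX2: "(\<integral>\<omega>. (norm (Fx (X \<omega>)))\<^sup>2 \<partial>M) = eta_fn (ax * dx / lam) Mx"
    unfolding Fx_def by (rule integral_norm_array_factor_squared_unif_sym[OF X distX assms(9)])
  have EY: "(\<integral>\<omega>. Fy (Y \<omega>) \<partial>M) = mu_fn (ay * dy / lam) My"
    unfolding Fy_def by (rule integral_array_factor_unif_sym[OF Y distY assms(11)])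
  have EY2: "(\<integral>\<omega>. (norm (Fy (Y \<omega>)))\<^sup>2 \<partial>M) = eta_fn (ay * dy / lam) My"
    unfolding Fy_def by (rule integral_norm_array_factor_squared_unif_sym[OF Y distY assms(11)])
  have Z: "(\<lambda>\<omega>. herm_inner Mx My (steer dx dy lam (thx1 \<omega>) (thy1 \<omega>))
                                  (steer dx dy lam (thx2 \<omega>) (thy2 \<omega>)))
    = (\<lambda>\<omega>. Fx (X \<omega>) * Fy (Y \<omega>))"
    by (simp add: herm_inner_steer Fx_def Fy_def X_def Y_def)
  have "(\<integral>\<omega>. Fx (X \<omega>) * Fy (Y \<omega>) \<partial>M) = (\<integral>\<omega>. Fx (X \<omega>) \<partial>M) * (\<integral>\<omega>. Fy (Y \<omega>) \<partial>M)"
    by (rule integral_indep_var_comp_mult[OF indep])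
       (auto simp: Fx_def Fy_def intro: norm_array_factor_le)
  moreover have "(\<integral>\<omega>. (norm (Fx (X \<omega>) * Fy (Y \<omega>)))\<^sup>2 \<partial>M)
      = (\<integral>\<omega>. (norm (Fx (X \<omega>)))\<^sup>2 \<partial>M) * (\<integral>\<omega>. (norm (Fy (Y \<omega>)))\<^sup>2 \<partial>M)"
    unfolding norm_mult power_mult_distrib
    by (rule integral_indep_var_comp_mult[OF indep])
       (auto simp: Fx_def Fy_def intro: power_mono norm_array_factor_le)
  ultimately show ?thesis
    unfolding Let_def Z EX EY EX2 EY2 by (simp add: norm_mult power_mult_distrib)
qed

end
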